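(* In the testing setting described in the context, let $\hat\rho^e$ be obtained as in Lemma 3 (with parameters $\delta_0\in(0,1]$, $\epsilon_0>0$) and $e^e$ as in Lemma 4 (with parameters $\delta_1\in(0,1]$, $\epsilon_1>0$), the two optimization runs using independent samples, and assume the hypotheses of both lemmas hold. Define $\rho^e=\hat\rho^e-e^e$ and $\epsilon=2e^e+\epsilon_0+\epsilon_1$. Then $$\mathbb{P}\big[\rho^*\ge\rho^e\big]\ge(1-\delta_0)(1-\delta_1),\qquad\mathbb{P}\big[|\rho^*-\rho^e|\le\epsilon\big]\ge(1-\delta_0)(1-\delta_1),$$ where $\rho^*=\min_{d\in\mathcal{D}}\mathbb{E}_{\Pi(d)}[\rho(\phi(d))]$.
   Context: Testing setting: $\mathcal{D}\subset\mathbb{R}^l$ is a compact convex set of test parameters. For each $d\in\mathcal{D}$, the true system produces a random state-trajectory signal $\phi(d)$ with distribution $\Pi(d)$, and a simulator produces a random signal $\hat\phi(d)$ with distribution $\hat\Pi(d)$, independent of $\phi(d)$. A robustness measure $\rho$ maps signals to bounded real values. Define $\hat\rho^*=\min_{d\in\mathcal{D}}\mathbb{E}_{\hat\Pi(d)}[\rho(\hat\phi(d))]$ and $e^*=\max_{d\in\mathcal{D}}\mathbb{E}_{\Pi(d),\hat\Pi(d)}[|\rho(\phi(d))-\rho(\hat\phi(d))|]$. Lemma 3: under RKHS-norm bound $B$, $R$-sub-Gaussian sampling noise and a kernel with sublinear information gain for $d\mapsto-\mathbb{E}[\rho(\hat\phi(d))]$, the Modified GP-UCB algorithm (a GP-UCB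 procedure that stops when $2\beta_i\sigma_{i-1}(z_i)\le\epsilon$ and outputs $J^e=\mu_{i-1}(z_i)+\beta_i\sigma_{i-1}(z_i)$) produces $\hat\rho^e=-J^e$ with $\mathbb{P}[\hat\rho^*\ge\hat\rho^e]\ge1-\delta_0$ and $\mathbb{P}[|\hat\rho^*-\hat\rho^e|\le\epsilon_0]\ge1-\delta_0$. Lemma 4: under the analogous hypotheses for $d\mapsto\mathbb{E}[|\rho(\phi(d))-\rho(\hat\phi(d))|]$, the same algorithm produces $e^e=J^e$ with $\mathbb{P}[e^*\le e^e]\ge1-\delta_1$ and $\mathbb{P}[|e^*-e^e|\le\epsilon_1]\ge1-\delta_1$. *)

theory Defs
  imports "HOL-Probability.Probability"
begin

text \<open>Optimal expected simulated robustness: rho_hat_star = min over d in D of E_{PiHat(d)}[rho].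
  Written with INF, which coincides with the minimum whenever the latter exists.\<close>
definition rho_hat_star :: "'d set \<Rightarrow> ('d \<Rightarrow> 's measure) \<Rightarrow> ('s \<Rightarrow> real) \<Rightarrow> real" where
  "rho_hat_star D PH rho = (INF d\<in>D. integral\<^sup>L (PH d) rho)"

definition rho_star :: "'d set \<Rightarrow> ('d \<Rightarrow> 's measure) \<Rightarrow> ('s \<Rightarrow> real) \<Rightarrow> real" where
  "rho_star D P rho = (INF d\<in>D. integral\<^sup>L (P d) rho)"

text \<open>Maximal expected sim-to-real robustness gap; phi(d) and phiHat(d) are independent,
  so their joint law is the product measure.\<close>
definition e_star :: "'d set \<Rightarrow> ('d \<Rightarrow> 's measure) \<Rightarrow> ('d \<Rightarrow> 's measure) \<Rightarrow> ('s \<Rightarrow> real) \<Rightarrow> real" where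
  "e_star D P PH rho =
     (SUP d\<in>D. integral\<^sup>L (P d \<Otimes>\<^sub>M PH d) (\<lambda>(x, y). \<bar>rho x - rho y\<bar>))"

end

theory Submission imports Defs begin

text \<open>For every parameter d, coupling the independent true and simulated signals gives
  \<open>|E \<rho>(\<phi> d) - E \<rho>(\<phi>' d)| \<le> E |\<rho>(\<phi> d) - \<rho>(\<phi>' d)|\<close>; taking infima and the supremum
  over D yields \<open>|rho_star - rho_hat_star| \<le> e_star\<close>, and \<open>e_star \<le> e_e\<close> on the event of
  Lemma 4. On the intersection of that event with the one from Lemma 3 both claims hold
  deterministically, and independence of the two optimisation runs
  makes the probability of the intersection at least \<open>(1 - \<delta>0)(1 - \<delta>1)\<close>.\<close>

lemma prob_space_abs_integral_le:
  fixes f :: "'a \<Rightarrow> real"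
  assumes "prob_space A" and "f \<in> borel_measurable A" and "\<forall>x\<in>space A. \<bar>f x\<bar> \<le> C"
  shows "\<bar>integral\<^sup>L A f\<bar> \<le> C"
proof -
  interpret A: prob_space A by fact
  have "integrable A f"
    using assms by (intro A.integrable_const_bound[where B = C]) auto
  have "\<bar>integral\<^sup>L A f\<bar> \<le> integral\<^sup>L A (\<lambda>x. \<bar>f x\<bar>)"
    by (rule integral_abs_bound)
  also have "\<dots> \<le> integral\<^sup>L A (\<lambda>_. C)"
    using \<open>integrable A f\<close> assms(3) by (intro integral_mono) auto
  finally show ?thesis by (simp add: A.prob_space)
qed

lemma abs_integral_diff_le_pair_integral_abs_diff:
  fixes f :: "'a \<Rightarrow> real"
  assumes A: "prob_space A" and B: "prob_space B"
    and [measurable]: "f \<in> borel_measurable A" "f \<in> borel_measurable B"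
    and bdd_A: "\<forall>x\<in>space A. \<bar>f x\<bar> \<le> C" and bdd_B: "\<forall>y\<in>space B. \<bar>f y\<bar> \<le> C"
  shows "\<bar>integral\<^sup>L A f - integral\<^sup>L B f\<bar> \<le> integral\<^sup>L (A \<Otimes>\<^sub>M B) (\<lambda>(x, y). \<bar>f x - f y\<bar>)"
proof -
  interpret A: prob_space A by fact
  interpret B: prob_space B by fact
  interpret AB: pair_prob_space A B by unfold_locales
  have int_A: "integrable A f" and int_B: "integrable B f"
    using bdd_A bdd_B
    by (auto intro: A.integrable_const_bound[where B = C] B.integrable_const_bound[where B = C])
  have "\<bar>f x - f y\<bar> \<le> 2 * C" if "x \<in> space A" "y \<in> space B" for x y
    using bdd_A bdd_B that abs_triangle_ineq4[of "f x" "f y"] by fastforce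
  then have "integrable (A \<Otimes>\<^sub>M B) (\<lambda>(x, y). \<bar>f x - f y\<bar>)"
    by (intro AB.P.integrable_const_bound[where B = "2 * C"] AE_I2)
       (auto simp: space_pair_measure)
  note int_pair = this AB.integrable_fst[of "\<lambda>x y. \<bar>f x - f y\<bar>", OF this]
  define c where "c = integral\<^sup>L B f"
  have inner: "\<bar>f x - c\<bar> \<le> integral\<^sup>L B (\<lambda>y. \<bar>f x - f y\<bar>)" for x
  proof -
    have "\<bar>f x - c\<bar> = \<bar>integral\<^sup>L B (\<lambda>y. f x - f y)\<bar>"
      using int_B by (simp add: c_def B.prob_space)
    also have "\<dots> \<le> integral\<^sup>L B (\<lambda>y. \<bar>f x - f y\<bar>)"
      by (rule integral_abs_bound)
    finally show ?thesis .
  qed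
  have "\<bar>integral\<^sup>L A f - c\<bar> = \<bar>integral\<^sup>L A (\<lambda>x. f x - c)\<bar>"
    using int_A by (simp add: A.prob_space)
  also have "\<dots> \<le> integral\<^sup>L A (\<lambda>x. \<bar>f x - c\<bar>)"
    by (rule integral_abs_bound)
  also have "\<dots> \<le> integral\<^sup>L A (\<lambda>x. integral\<^sup>L B (\<lambda>y. \<bar>f x - f y\<bar>))"
    using int_A int_pair inner by (intro integral_mono) auto
  also have "\<dots> = integral\<^sup>L (A \<Otimes>\<^sub>M B) (\<lambda>(x, y). \<bar>f x - f y\<bar>)"
    using AB.integral_fst[of "\<lambda>x y. \<bar>f x - f y\<bar>"] int_pair by simp
  finally show ?thesis by (simp add: c_def)
qed

lemma abs_cINF_diff_le_cSUP:
  fixes a b g :: "'d \<Rightarrow> real"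
  assumes "D \<noteq> {}" and "bdd_below (a ` D)" and "bdd_below (b ` D)" and "bdd_above (g ` D)"
    and diff_le: "\<And>d. d \<in> D \<Longrightarrow> \<bar>a d - b d\<bar> \<le> g d"
  shows "\<bar>(INF d\<in>D. a d) - (INF d\<in>D. b d)\<bar> \<le> (SUP d\<in>D. g d)"
proof -
  have g_le: "g d \<le> (SUP d\<in>D. g d)" if "d \<in> D" for d
    using assms(4) that by (rule cSUP_upper2) simp
  have "(INF d\<in>D. b d) - (SUP d\<in>D. g d) \<le> (INF d\<in>D. a d)"
  proof (rule cINF_greatest[OF assms(1)], simp only: diff_le_eq)
    fix d assume "d \<in> D"
    then show "(INF d\<in>D. b d) \<le> a d + (SUP d\<in>D. g d)"
      using cINF_lower[OF assms(3)] diff_le g_le by fastforce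
  qed
  moreover have "(INF d\<in>D. a d) - (SUP d\<in>D. g d) \<le> (INF d\<in>D. b d)"
  proof (rule cINF_greatest[OF assms(1)], simp only: diff_le_eq)
    fix d assume "d \<in> D"
    then show "(INF d\<in>D. a d) \<le> b d + (SUP d\<in>D. g d)"
      using cINF_lower[OF assms(2)] diff_le g_le by fastforce
  qed
  ultimately show ?thesis by linarith
qed

lemma rho_star_rho_hat_star_gap:
  assumes "D \<noteq> {}"
    and P: "\<And>d. d \<in> D \<Longrightarrow> prob_space (P d) \<and> sets (P d) = sets S"
    and PH: "\<And>d. d \<in> D \<Longrightarrow> prob_space (PH d) \<and> sets (PH d) = sets S"
    and rho_meas: "rho \<in> borel_measurable S"
    and rho_bdd: "\<forall>x\<in>space S. \<bar>rho x\<bar> \<le> C"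
  shows "\<bar>rho_star D P rho - rho_hat_star D PH rho\<bar> \<le> e_star D P PH rho"
proof -
  define a where "a d = integral\<^sup>L (P d) rho" for d
  define b where "b d = integral\<^sup>L (PH d) rho" for d
  define g where "g d = integral\<^sup>L (P d \<Otimes>\<^sub>M PH d) (\<lambda>(x, y). \<bar>rho x - rho y\<bar>)" for d
  have bounds: "\<bar>a d\<bar> \<le> C" "\<bar>b d\<bar> \<le> C" "\<bar>g d\<bar> \<le> 2 * C" "\<bar>a d - b d\<bar> \<le> g d"
    if "d \<in> D" for d
  proof -
    interpret PP: pair_prob_space "P d" "PH d"
      using P[OF that] PH[OF that] by (simp add: pair_prob_space_def pair_sigma_finite_def
        prob_space_imp_sigma_finite)
    have sp: "space (P d) = space S" "space (PH d) = space S"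
      using P[OF that] PH[OF that] by (metis sets_eq_imp_space_eq)+
    have [measurable]: "rho \<in> borel_measurable (P d)" "rho \<in> borel_measurable (PH d)"
      using P[OF that] PH[OF that] rho_meas by (auto cong: measurable_cong_sets)
    show "\<bar>a d\<bar> \<le> C" "\<bar>b d\<bar> \<le> C" "\<bar>a d - b d\<bar> \<le> g d"
      using rho_bdd sp unfolding a_def b_def g_def
      by (auto intro!: prob_space_abs_integral_le abs_integral_diff_le_pair_integral_abs_diff
          PP.M1.prob_space_axioms PP.M2.prob_space_axioms)
    have "\<bar>rho x - rho y\<bar> \<le> 2 * C" if "x \<in> space S" "y \<in> space S" for x y
    proof -
      have "\<bar>rho x\<bar> \<le> C" "\<bar>rho y\<bar> \<le> C" using rho_bdd that by auto
      then show ?thesis by linarith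
    qed
    then show "\<bar>g d\<bar> \<le> 2 * C"
      unfolding g_def using sp
      by (intro prob_space_abs_integral_le PP.P.prob_space_axioms) (auto simp: space_pair_measure)
  qed
  have bdd: "bdd_below (a ` D)" "bdd_below (b ` D)" "bdd_above (g ` D)"
    using bounds by (auto intro!: bdd_belowI2[where m = "-C"] bdd_aboveI2[where M = "2 * C"]
        simp: abs_le_iff minus_le_iff)
  show ?thesis
    unfolding rho_star_def rho_hat_star_def e_star_def
    using abs_cINF_diff_le_cSUP[OF \<open>D \<noteq> {}\<close> bdd] bounds(4) by (simp add: a_def b_def g_def)
qed

lemma (in prob_space) indep_var_prob_conj_ge:
  assumes indep: "indep_var MX X MY Y" and sets: "A \<in> sets MX" "B \<in> sets MY"
    and p: "0 \<le> p" "p \<le> prob {w \<in> space M. X w \<in> A}"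
    and q: "0 \<le> q" "q \<le> prob {w \<in> space M. Y w \<in> B}"
  shows "p * q \<le> prob {w \<in> space M. X w \<in> A \<and> Y w \<in> B}"
proof -
  have "prob {w \<in> space M. X w \<in> A \<and> Y w \<in> B}
      = prob {w \<in> space M. X w \<in> A} * prob {w \<in> space M. Y w \<in> B}"
    using indep_varD[OF indep sets] by (simp add: vimage_def Int_def conj_commute)
  then show ?thesis
    using p q by (simp add: mult_mono)
qed

theorem theorem2:
  fixes D :: "(real ^ 'l) set"
    and S :: "'s measure"
    and P PH :: "real ^ 'l \<Rightarrow> 's measure"
    and rho :: "'s \<Rightarrow> real"
    and M :: "'w measure"
    and rho_hat_e e_e :: "'w \<Rightarrow> real"
    and \<delta>0 \<delta>1 \<epsilon>0 \<epsilon>1 :: real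
  assumes D: "compact D" "convex D" "D \<noteq> {}"
    and P: "\<And>d. d \<in> D \<Longrightarrow> prob_space (P d) \<and> sets (P d) = sets S"
    and PH: "\<And>d. d \<in> D \<Longrightarrow> prob_space (PH d) \<and> sets (PH d) = sets S"
    and rho_meas: "rho \<in> borel_measurable S"
    and rho_bdd: "\<exists>B. \<forall>x\<in>space S. \<bar>rho x\<bar> \<le> B"
    and M: "prob_space M"
    and rv: "rho_hat_e \<in> borel_measurable M" "e_e \<in> borel_measurable M"
    and indep: "prob_space.indep_var M borel rho_hat_e borel e_e"
    and \<delta>0: "0 < \<delta>0" "\<delta>0 \<le> 1" and \<epsilon>0: "0 < \<epsilon>0"
    and \<delta>1: "0 < \<delta>1" "\<delta>1 \<le> 1" and \<epsilon>1: "0 < \<epsilon>1"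
    and lemma3_a: "measure M {w \<in> space M. rho_hat_star D PH rho \<ge> rho_hat_e w} \<ge> 1 - \<delta>0"
    and lemma3_b: "measure M {w \<in> space M. \<bar>rho_hat_star D PH rho - rho_hat_e w\<bar> \<le> \<epsilon>0} \<ge> 1 - \<delta>0"
    and lemma4_a: "measure M {w \<in> space M. e_star D P PH rho \<le> e_e w} \<ge> 1 - \<delta>1"
    and lemma4_b: "measure M {w \<in> space M. \<bar>e_star D P PH rho - e_e w\<bar> \<le> \<epsilon>1} \<ge> 1 - \<delta>1"
  shows "(measure M {w \<in> space M. rho_star D P rho \<ge> rho_hat_e w - e_e w}
           \<ge> (1 - \<delta>0) * (1 - \<delta>1)
       \<and> measure M {w \<in> space M.
           \<bar>rho_star D P rho - (rho_hat_e w - e_e w)\<bar> \<le> 2 * e_e w + \<epsilon>0 + \<epsilon>1}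
           \<ge> (1 - \<delta>0) * (1 - \<delta>1))"
proof -
  interpret M: prob_space M by (rule M)
  note [measurable] = rv
  let ?r = "rho_star D P rho" and ?rh = "rho_hat_star D PH rho" and ?e = "e_star D P PH rho"
  obtain C where "\<forall>x\<in>space S. \<bar>rho x\<bar> \<le> C" using rho_bdd by blast
  then have gap: "\<bar>?r - ?rh\<bar> \<le> ?e"
    using rho_star_rho_hat_star_gap[of D P S PH rho C] D(3) P PH rho_meas by auto
  have "(1 - \<delta>0) * (1 - \<delta>1) \<le> measure M {w \<in> space M. rho_hat_e w \<in> {..?rh} \<and> e_e w \<in> {?e..}}"
    using lemma3_a lemma4_a \<delta>0 \<delta>1 by (intro M.indep_var_prob_conj_ge[OF indep]) auto
  also have "\<dots> \<le> measure M {w \<in> space M. ?r \<ge> rho_hat_e w - e_e w}"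
    using gap by (intro M.finite_measure_mono) (auto simp: abs_le_iff)
  finally have first: "(1 - \<delta>0) * (1 - \<delta>1) \<le> \<dots>" .
  text \<open>Only the one-sided bound \<open>e_star \<le> e_e\<close> is needed.\<close>
  have "(1 - \<delta>0) * (1 - \<delta>1)
      \<le> measure M {w \<in> space M. rho_hat_e w \<in> {?rh - \<epsilon>0..?rh + \<epsilon>0} \<and> e_e w \<in> {?e..}}"
    using lemma3_b lemma4_a \<delta>0 \<delta>1
    by (intro M.indep_var_prob_conj_ge[OF indep]) (auto simp: abs_le_iff algebra_simps)
  also have "\<dots> \<le> measure M {w \<in> space M.
      \<bar>?r - (rho_hat_e w - e_e w)\<bar> \<le> 2 * e_e w + \<epsilon>0 + \<epsilon>1}"
    using gap \<epsilon>1 by (intro M.finite_measure_mono) (auto simp: abs_le_iff)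
  finally show ?thesis using first by blast
qed

end
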